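(* Let $G$ be a graph with $n$ vertices. If $\mathrm{Deg}\,H(G,x)\ge n$, then $G$ contains a triangle (i.e. its girth is $3$). Furthermore, if $G$ is triangle-free and $\mathrm{Deg}\,H(G,x)=n-1$, then $G$ is connected and has diameter at most $3$.
   Context: All graphs are finite, simple and have no isolated vertices; $d_u$ is the degree of $u$. The harmonic polynomial is $H(G,x)=\sum_{uv\in E(G)}x^{d_u+d_v-1}$, and $\mathrm{Deg}\,p(x)$ denotes the degree of a polynomial $p$. The girth is the minimum length of a cycle. *)

theory Defs
  imports Main "HOL-Computational_Algebra.Polynomial"
begin

definition simple_graph :: "'a set \<Rightarrow> ('a \<Rightarrow> 'a \<Rightarrow> bool) \<Rightarrow> bool" where
  "simple_graph V E \<longleftrightarrow> finite V \<and> V \<noteq> {}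
     \<and> (\<forall>u v. E u v \<longrightarrow> u \<in> V \<and> v \<in> V)
     \<and> (\<forall>u v. E u v \<longrightarrow> E v u)
     \<and> (\<forall>u. \<not> E u u)
     \<and> (\<forall>v\<in>V. \<exists>u. E v u)"

definition vdeg :: "('a \<Rightarrow> 'a \<Rightarrow> bool) \<Rightarrow> 'a \<Rightarrow> nat" where
  "vdeg E v = card {u. E v u}"

definition edges :: "('a \<Rightarrow> 'a \<Rightarrow> bool) \<Rightarrow> 'a set set" where
  "edges E = {{u, v} | u v. E u v}"

definition harmonic_poly :: "('a \<Rightarrow> 'a \<Rightarrow> bool) \<Rightarrow> int poly" where
  "harmonic_poly E = (\<Sum>e\<in>edges E. monom 1 ((\<Sum>w\<in>e. vdeg E w) - 1))"

definition has_triangle :: "('a \<Rightarrow> 'a \<Rightarrow> bool) \<Rightarrow> bool" where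
  "has_triangle E \<longleftrightarrow> (\<exists>a b c. E a b \<and> E b c \<and> E a c)"

definition connected_graph :: "'a set \<Rightarrow> ('a \<Rightarrow> 'a \<Rightarrow> bool) \<Rightarrow> bool" where
  "connected_graph V E \<longleftrightarrow> (\<forall>u\<in>V. \<forall>v\<in>V. E\<^sup>*\<^sup>* u v)"

text \<open>Distance: length of a shortest walk (= shortest path).\<close>
definition gdist :: "('a \<Rightarrow> 'a \<Rightarrow> bool) \<Rightarrow> 'a \<Rightarrow> 'a \<Rightarrow> nat" where
  "gdist E u v = (LEAST k. (E ^^ k) u v)"

definition diameter :: "'a set \<Rightarrow> ('a \<Rightarrow> 'a \<Rightarrow> bool) \<Rightarrow> nat" where
  "diameter V E = Max {gdist E u v | u v. u \<in> V \<and> v \<in> V}"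

end

theory Submission
  imports Defs
begin

text \<open>In a triangle-free graph the neighbourhoods of the two ends of an edge \<open>uv\<close> are disjoint,
  so \<open>d\<^sub>u + d\<^sub>v \<le> n\<close> and every exponent of \<open>H(G,x)\<close> is at most \<open>n - 1\<close>. If the exponent
  \<open>n - 1\<close> occurs, some edge \<open>uv\<close> has \<open>N(u) \<union> N(v) = V\<close>; then any two vertices are joined through
  \<open>u\<close> or \<open>v\<close> by a walk of length 2 or 3.\<close>

lemma relpowp_2_I: "E a b \<Longrightarrow> E b c \<Longrightarrow> (E ^^ 2) a c"
  by (auto simp: numeral_2_eq_2 relcompp_apply)

lemma relpowp_3_I: "E a b \<Longrightarrow> E b c \<Longrightarrow> E c d \<Longrightarrow> (E ^^ 3) a d"
  by (auto simp: numeral_3_eq_3 relcompp_apply)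

lemma coeff_harmonic_poly:
  assumes "finite (edges E)"
  shows "coeff (harmonic_poly E) k = int (card {e \<in> edges E. (\<Sum>w\<in>e. vdeg E w) - 1 = k})"
  using assms by (simp add: harmonic_poly_def coeff_sum coeff_monom sum.If_cases Int_def)

lemma degree_harmonic_poly:
  assumes fin: "finite (edges E)" and ne: "edges E \<noteq> {}"
  shows "degree (harmonic_poly E) = Max ((\<lambda>e. (\<Sum>w\<in>e. vdeg E w) - 1) ` edges E)"
    (is "_ = Max (?x ` _)")
proof (rule antisym)
  show "degree (harmonic_poly E) \<le> Max (?x ` edges E)"
    unfolding harmonic_poly_def
    using fin by (intro degree_sum_le order.trans[OF degree_monom_le]) auto
  have "Max (?x ` edges E) \<in> ?x ` edges E"
    using fin ne by simp
  then obtain e where e: "e \<in> edges E" "?x e = Max (?x ` edges E)"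
    by auto
  have "{e' \<in> edges E. ?x e' = ?x e} \<noteq> {}"
    using e by blast
  then have "coeff (harmonic_poly E) (?x e) \<noteq> 0"
    using fin by (simp add: coeff_harmonic_poly)
  then show "Max (?x ` edges E) \<le> degree (harmonic_poly E)"
    using e(2) le_degree by metis
qed

lemma connected_if_walks:
  "(\<And>w w'. w \<in> V \<Longrightarrow> w' \<in> V \<Longrightarrow> \<exists>k. (E ^^ k) w w') \<Longrightarrow> connected_graph V E"
  by (meson connected_graph_def relpowp_imp_rtranclp)

lemma diameter_le_if_walks:
  assumes "finite V" "V \<noteq> {}" and walks: "\<And>w w'. w \<in> V \<Longrightarrow> w' \<in> V \<Longrightarrow> \<exists>k\<le>d. (E ^^ k) w w'"
  shows "diameter V E \<le> d"
proof -
  have "{gdist E w w' | w w'. w \<in> V \<and> w' \<in> V} = (\<lambda>(w, w'). gdist E w w') ` (V \<times> V)"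
    by auto
  moreover have "gdist E w w' \<le> d" if "w \<in> V" "w' \<in> V" for w w'
    using walks[OF that] unfolding gdist_def by (meson Least_le order_trans)
  ultimately show ?thesis
    using assms(1,2) unfolding diameter_def by (simp add: Max_le_iff)
qed

context
  fixes V :: "'a set" and E :: "'a \<Rightarrow> 'a \<Rightarrow> bool"
  assumes G: "simple_graph V E"
begin

lemma finite_edges: "finite (edges E)"
proof -
  have "edges E \<subseteq> Pow V"
    using G by (auto simp: edges_def simple_graph_def)
  then show ?thesis
    using G finite_subset by (fastforce simp: simple_graph_def)
qed

lemma edges_nonempty: "edges E \<noteq> {}"
  using G by (fastforce simp: simple_graph_def edges_def)

lemma finite_neighbours: "finite {w. E u w}"
proof -
  have "{w. E u w} \<subseteq> V"
    using G by (auto simp: simple_graph_def)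
  then show ?thesis
    using G finite_subset by (auto simp: simple_graph_def)
qed

lemma vdeg_pos: "E u v \<Longrightarrow> 0 < vdeg E u"
  using finite_neighbours by (auto simp: vdeg_def card_gt_0_iff)

lemma sum_vdeg_edge:
  assumes "e \<in> edges E"
  obtains u v where "E u v" "(\<Sum>w\<in>e. vdeg E w) = vdeg E u + vdeg E v"
proof -
  obtain u v where "E u v" "e = {u, v}"
    using assms by (auto simp: edges_def)
  moreover have "u \<noteq> v"
    using \<open>E u v\<close> G by (auto simp: simple_graph_def)
  ultimately show thesis
    using that by auto
qed

lemma vdeg_add_eq_card_neighbours:
  assumes "\<not> has_triangle E" "E u v"
  shows "vdeg E u + vdeg E v = card ({w. E u w} \<union> {w. E v w})"
proof -
  have "{w. E u w} \<inter> {w. E v w} = {}"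
    using assms by (auto simp: has_triangle_def)
  then show ?thesis
    unfolding vdeg_def using finite_neighbours by (simp add: card_Un_disjoint)
qed

lemma neighbours_subset: "{w. E u w} \<union> {w. E v w} \<subseteq> V"
  using G by (auto simp: simple_graph_def)

lemma vdeg_add_le_card_if_triangle_free:
  assumes "\<not> has_triangle E" "E u v"
  shows "vdeg E u + vdeg E v \<le> card V"
  using assms G neighbours_subset
  by (simp add: vdeg_add_eq_card_neighbours card_mono simple_graph_def)

lemma degree_harmonic_poly_le_if_triangle_free:
  assumes "\<not> has_triangle E"
  shows "degree (harmonic_poly E) \<le> card V - 1"
proof -
  have "(\<Sum>w\<in>e. vdeg E w) - 1 \<le> card V - 1" if "e \<in> edges E" for e
    using sum_vdeg_edge[OF that] vdeg_add_le_card_if_triangle_free[OF assms]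
    by (metis diff_le_mono)
  then show ?thesis
    using finite_edges edges_nonempty by (simp add: degree_harmonic_poly)
qed

lemma dominating_edge_if_degree_harmonic_poly:
  assumes "\<not> has_triangle E" and deg: "degree (harmonic_poly E) = card V - 1"
  obtains u v where "E u v" "\<forall>w\<in>V. E u w \<or> E v w"
proof -
  let ?x = "\<lambda>e. (\<Sum>w\<in>e. vdeg E w) - 1"
  have "Max (?x ` edges E) \<in> ?x ` edges E"
    using finite_edges edges_nonempty by simp
  then have "card V - 1 \<in> ?x ` edges E"
    using finite_edges edges_nonempty deg by (metis degree_harmonic_poly)
  then obtain e where "e \<in> edges E" "?x e = card V - 1"
    by auto
  then obtain u v where uv: "E u v" "vdeg E u + vdeg E v - 1 = card V - 1"
    by (metis sum_vdeg_edge)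
  have "card V \<noteq> 0"
    using G by (simp add: simple_graph_def)
  then have "card ({w. E u w} \<union> {w. E v w}) = card V"
    using uv vdeg_pos[OF uv(1)] vdeg_add_eq_card_neighbours[OF assms(1) uv(1)] by linarith
  then have "{w. E u w} \<union> {w. E v w} = V"
    using G neighbours_subset by (simp add: card_subset_eq simple_graph_def)
  then show thesis
    using that uv(1) by blast
qed

lemma walk_le_3_if_dominating_edge:
  assumes uv: "E u v" and dom: "\<forall>w\<in>V. E u w \<or> E v w" and "w \<in> V" "w' \<in> V"
  shows "\<exists>k\<le>3. (E ^^ k) w w'"
proof -
  have sym: "E a b \<Longrightarrow> E b a" for a b
    using G by (simp add: simple_graph_def)
  have "(E ^^ 2) w w' \<or> (E ^^ 3) w w'"
    using dom \<open>w \<in> V\<close> \<open>w' \<in> V\<close> uv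
    by (metis sym relpowp_2_I relpowp_3_I)
  then show ?thesis
    by (metis eval_nat_numeral(2,3) le_Suc_eq order_refl)
qed

end

theorem theorem11:
  fixes V :: "'a set" and E :: "'a \<Rightarrow> 'a \<Rightarrow> bool"
  assumes "simple_graph V E"
  shows "(degree (harmonic_poly E) \<ge> card V \<longrightarrow> has_triangle E)
       \<and> (\<not> has_triangle E \<and> degree (harmonic_poly E) = card V - 1
            \<longrightarrow> connected_graph V E \<and> diameter V E \<le> 3)"
proof (intro conjI impI)
  have "card V \<noteq> 0"
    using assms by (simp add: simple_graph_def)
  then show "has_triangle E" if "degree (harmonic_poly E) \<ge> card V"
    using that degree_harmonic_poly_le_if_triangle_free[OF assms] by fastforce
next
  assume "\<not> has_triangle E \<and> degree (harmonic_poly E) = card V - 1"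
  then obtain u v where "E u v" "\<forall>w\<in>V. E u w \<or> E v w"
    using dominating_edge_if_degree_harmonic_poly[OF assms] by blast
  then have walks: "\<exists>k\<le>3. (E ^^ k) w w'" if "w \<in> V" "w' \<in> V" for w w'
    using walk_le_3_if_dominating_edge[OF assms] that by blast
  show "connected_graph V E"
    using walks by (intro connected_if_walks) blast
  have "finite V" "V \<noteq> {}"
    using assms by (simp_all add: simple_graph_def)
  then show "diameter V E \<le> 3"
    using walks by (intro diameter_le_if_walks)
qed

end
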